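(* Fix $s\in(0,2]$. As $d\to\infty$, $$\bar{\sigma}_0^2(s,d)=\frac{2}{d}+\frac{5(2-s)}{2d^2}+o\Big(\frac1{d^2}\Big),\qquad \bar{\sigma}_0(s,d)=\frac{\sqrt2}{\sqrt d}+\frac{5\sqrt2(2-s)}{8d\sqrt d}+o\Big(\frac1{d\sqrt d}\Big).$$
   Context: For integers $d\ge1$ and real $s>0$, let $I_0(s,d)=2^{s/2}\sum_{n=1}^{d}\binom{d}{n}2^{-d}\,\Gamma(n/2+s/2)/\Gamma(n/2)$ and $\bar{\sigma}_0(s,d)=I_0(s,d)^{-1/s}$. (Equivalently $I_0(s,d)=\mathbb{E}\|\max(Z,0)\|^s$ for $Z\sim\mathcal N(0,I_d)$, the maximum taken componentwise, and $\bar\sigma_0(s,d)$ is the weight standard deviation at which a zero-bias ReLU network of width $d$ with i.i.d. $\mathcal N(0,\sigma^2)$ weights preserves the $s$-th moment of the norm of layer outputs.) *)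

theory Defs
  imports "HOL-Analysis.Analysis" "HOL-Library.Landau_Symbols"
begin

definition I0 :: "real \<Rightarrow> nat \<Rightarrow> real" where
  "I0 s d = 2 powr (s/2) *
     (\<Sum>n=1..d. real (d choose n) * 2 powr (- real d) *
        Gamma (real n / 2 + s / 2) / Gamma (real n / 2))"

definition sigma0 :: "real \<Rightarrow> nat \<Rightarrow> real" where
  "sigma0 s d = I0 s d powr (- 1 / s)"

end

theory Submission
  imports Defs "HOL-Real_Asymp.Real_Asymp"
begin

text \<open>
  Write \<open>p = s/2\<close>. The squared norm of \<open>max(Z, 0)\<close> is chi-squared with \<open>N \<sim> Bin(d, 1/2)\<close>
  degrees of freedom, so \<open>I0 s d = E h(N)\<close> with \<open>h(n) = 2^p \<Gamma>(n/2 + p) / \<Gamma>(n/2)\<close>, and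
  Gauss's product formula gives \<open>h(n) = n^p + p(p - 1) n^(p-1) + O(n^(p-2))\<close>. Expanding \<open>n^p\<close>
  to second and \<open>n^(p-1)\<close> to first order around the mean \<open>d/2\<close>, the relative deviation
  \<open>X = (2N - d)/d\<close> enters only through \<open>E X = 0\<close>, \<open>E X^2 = 1/d\<close> and \<open>E |X|^3 = O(d^(-3/2))\<close>,
  whence \<open>I0 s d = (d/2)^p (1 + 5p(p - 1)/(2d) + O(d^(-3/2)))\<close>. As \<open>sigma0 s d ^ 2 = I0 s d ^ (-1/p)\<close>,
  linearising \<open>(1 + u)^q\<close> twice gives both expansions.
\<close>

section \<open>Taylor estimates\<close>

lemma powr_one_plus_taylor:
  fixes q x :: real and n :: nat
  assumes n: "0 < n" and qn: "q \<le> real n" and x: "x \<ge> -1/2"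
  shows "\<bar>(1+x) powr q - (\<Sum>m<n. (\<Prod>j<m. (q - real j)) / fact m * x^m)\<bar>
     \<le> \<bar>\<Prod>j<n. (q - real j)\<bar> / fact n * 2 powr (real n - q) * \<bar>x\<bar>^n"
proof (cases "x = 0")
  case True
  have "(\<Sum>m<n. (\<Prod>j<m. (q - real j)) / fact m * x^m) = (\<Sum>m<n. if m = 0 then 1 else 0)"
    using True by (intro sum.cong) auto
  also have "\<dots> = 1" using n by (simp add: sum.delta)
  finally show ?thesis using True n by simp
next
  case False
  define D where "D = (\<lambda>m t. (\<Prod>j<m. (q - real j)) * (1+t) powr (q - real m))"
  have deriv: "\<forall>m t. m < n \<and> -1/2 \<le> t \<and> t \<le> max x 0 + 1 \<longrightarrow> DERIV (D m) t :> D (Suc m) t"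
  proof (intro allI impI)
    fix m t assume "m < n \<and> -1/2 \<le> t \<and> t \<le> max x 0 + 1"
    hence t: "1 + t > 0" by auto
    have "DERIV (\<lambda>t. (1+t) powr (q - real m)) t :> (q - real m) * (1+t) powr (q - real m - 1)"
      using t by (auto intro!: derivative_eq_intros)
    from DERIV_cmult[OF this, of "\<Prod>j<m. (q - real j)"]
    show "DERIV (D m) t :> D (Suc m) t"
      unfolding D_def by (simp add: prod.lessThan_Suc algebra_simps)
  qed
  have D0: "D 0 = (\<lambda>t. (1+t) powr q)" unfolding D_def by simp
  have "-1/2 \<le> (0::real)" "(0::real) \<le> max x 0 + 1" "x \<le> max x 0 + 1" by auto
  from Taylor[OF n D0 deriv this(1,2) x this(3) False]
  obtain t where t: "if x < 0 then x < t \<and> t < 0 else 0 < t \<and> t < x"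
    and eq: "(1+x) powr q = (\<Sum>m<n. D m 0 / fact m * (x - 0) ^ m) + D n t / fact n * (x - 0) ^ n"
    by auto
  have t1: "1 + t \<ge> 1/2" using t x by (auto split: if_splits)
  have "(1+t) powr (q - real n) \<le> (1/2) powr (q - real n)"
    by (rule powr_mono2') (use t1 qn in auto)
  also have "(1/2::real) powr (q - real n) = 2 powr (real n - q)"
    by (simp add: powr_divide powr_minus_divide[symmetric])
  finally have pw: "(1+t) powr (q - real n) \<le> 2 powr (real n - q)" .
  have "\<bar>(1+x) powr q - (\<Sum>m<n. (\<Prod>j<m. (q - real j)) / fact m * x^m)\<bar>
      = \<bar>\<Prod>j<n. (q - real j)\<bar> / fact n * (1+t) powr (q - real n) * \<bar>x\<bar>^n"
    using eq t1 unfolding D_def by (simp add: abs_mult power_abs)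
  also have "\<dots> \<le> \<bar>\<Prod>j<n. (q - real j)\<bar> / fact n * 2 powr (real n - q) * \<bar>x\<bar>^n"
    by (intro mult_right_mono mult_left_mono pw) auto
  finally show ?thesis .
qed

lemma half_p_sq_minus_p_bounds:
  fixes p :: real assumes "0 < p" "p \<le> 1"
  shows "-1 \<le> (p^2 - p)/2" and "(p^2 - p)/2 \<le> 0"
proof -
  have "p * p \<le> p" "0 \<le> p * p" using assms mult_left_mono[of p 1 p] by auto
  hence "-2 \<le> p * p - p" "p * p - p \<le> 0" using assms by linarith+
  thus "-1 \<le> (p^2 - p)/2" and "(p^2 - p)/2 \<le> 0" by (simp_all add: power2_eq_square)
qed

lemma powr_second_order_bound:
  fixes p y :: real assumes p: "0 < p" "p \<le> 1" and y: "y \<ge> -1"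
  shows "\<bar>(1+y) powr p - (1 + p*y + (p^2-p)/2*y^2)\<bar> \<le> 36 * \<bar>y\<bar>^3"
proof (cases "y \<ge> -1/2")
  case True
  have taylor: "\<bar>(1+y) powr p - (\<Sum>m<3. (\<Prod>j<m. (p - real j)) / fact m * y^m)\<bar>
     \<le> \<bar>\<Prod>j<3. (p - real j)\<bar> / fact 3 * 2 powr (real 3 - p) * \<bar>y\<bar>^3"
    by (rule powr_one_plus_taylor) (use p True in auto)
  have poly: "(\<Sum>m<3. (\<Prod>j<m. (p - real j)) / fact m * y^m) = 1 + p*y + (p^2-p)/2*y^2"
    by (simp add: eval_nat_numeral power2_eq_square algebra_simps)
  have "\<bar>\<Prod>j<3. (p - real j)\<bar> / fact 3 * 2 powr (real 3 - p) \<le> 36"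
  proof -
    have "\<bar>\<Prod>j<3. (p - real j)\<bar> = \<bar>p\<bar> * \<bar>p - 1\<bar> * \<bar>p - 2\<bar>"
      by (simp add: eval_nat_numeral abs_mult)
    also have "\<dots> \<le> 1 * 1 * 2" using p by (intro mult_mono) auto
    finally have "\<bar>\<Prod>j<3. (p - real j)\<bar> \<le> 2" by simp
    moreover have "2 powr (real 3 - p) \<le> 2 powr 3" using p by (intro powr_mono) auto
    ultimately have "\<bar>\<Prod>j<3. (p - real j)\<bar> * 2 powr (real 3 - p) \<le> 2 * 8"
      by (intro mult_mono) auto
    thus ?thesis by (simp add: fact_numeral)
  qed
  hence "\<bar>\<Prod>j<3. (p - real j)\<bar> / fact 3 * 2 powr (real 3 - p) * \<bar>y\<bar>^3 \<le> 36 * \<bar>y\<bar>^3"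
    by (intro mult_right_mono) auto
  with taylor show ?thesis unfolding poly by linarith
next
  case False
  hence y1: "\<bar>y\<bar> \<le> 1" "\<bar>y\<bar> \<ge> 1/2" using y by auto
  have "(1+y) powr p \<le> 1 powr p" using y False p by (intro powr_mono2) auto
  hence "(1+y) powr p \<le> 1" by simp
  moreover have "\<bar>p*y\<bar> \<le> 1" using p y1 by (simp add: abs_mult mult_le_one)
  moreover have "\<bar>(p^2-p)/2*y^2\<bar> \<le> 1"
  proof -
    have "\<bar>(p^2-p)/2\<bar> * y^2 \<le> 1 * 1"
      using half_p_sq_minus_p_bounds[OF p] y1 power_mono[of "\<bar>y\<bar>" 1 2] by (intro mult_mono) auto
    thus ?thesis by (simp only: abs_mult abs_power2)
  qed
  ultimately have "\<bar>(1+y) powr p - (1 + p*y + (p^2-p)/2*y^2)\<bar> \<le> 4"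
    using powr_ge_zero[of "1+y" p] by linarith
  also have "4 \<le> 32 * \<bar>y\<bar>^3" using y1 power_mono[of "1/2" "\<bar>y\<bar>" 3] by (simp add: power_divide)
  finally show ?thesis by simp
qed

lemma powr_first_order_bound:
  fixes p y :: real assumes p: "0 < p" "p \<le> 1" and y: "y \<ge> -1/2"
  shows "\<bar>(1+y) powr (p-1) - 1\<bar> \<le> 4 * \<bar>y\<bar>"
proof -
  have "\<bar>(1+y) powr (p-1) - (\<Sum>m<1. (\<Prod>j<m. (p - 1 - real j)) / fact m * y^m)\<bar>
     \<le> \<bar>\<Prod>j<1. (p - 1 - real j)\<bar> / fact 1 * 2 powr (real 1 - (p - 1)) * \<bar>y\<bar>^1"
    by (rule powr_one_plus_taylor) (use p y in auto)
  hence "\<bar>(1+y) powr (p-1) - 1\<bar> \<le> \<bar>p - 1\<bar> * 2 powr (2 - p) * \<bar>y\<bar>" by simp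
  also have "\<dots> \<le> 1 * 2 powr 2 * \<bar>y\<bar>"
    using p by (intro mult_right_mono mult_mono powr_mono) auto
  finally show ?thesis by simp
qed

lemma ln_one_plus_bounds:
  fixes z :: real assumes "z \<ge> 0"
  shows "z - z^2/2 \<le> ln (1+z)" and "ln (1+z) \<le> z - z^2/2 + z^3/3"
proof -
  have "z - z^2/2 \<le> ln (1+z) \<and> ln (1+z) \<le> z - z^2/2 + z^3/3"
  proof (cases "z = 0")
    case True thus ?thesis by simp
  next
    case False
    hence z: "z > 0" using assms by simp
    define D :: "nat \<Rightarrow> real \<Rightarrow> real" where
      "D = (\<lambda>m t. if m = 0 then ln (1+t) else if m = 1 then 1/(1+t)
          else if m = 2 then -1/(1+t)^2 else 2/(1+t)^3)"
    have deriv: "\<forall>m t. m < 3 \<and> 0 \<le> t \<and> t \<le> z \<longrightarrow> DERIV (D m) t :> D (Suc m) t"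
    proof (intro allI impI)
      fix m :: nat and t :: real assume mt: "m < 3 \<and> 0 \<le> t \<and> t \<le> z"
      hence t: "1 + t > 0" by auto
      have "DERIV (\<lambda>t. ln (1+t)) t :> 1/(1+t)"
        using t by (auto intro!: derivative_eq_intros)
      moreover have "DERIV (\<lambda>t. 1/(1+t)) t :> -1/(1+t)^2"
        using t by (auto intro!: derivative_eq_intros simp: power2_eq_square)
      moreover have "DERIV (\<lambda>t. -1/(1+t)^2) t :> 2/(1+t)^3"
        using t by (auto intro!: derivative_eq_intros simp: divide_simps eval_nat_numeral)
      moreover have "m = 0 \<or> m = 1 \<or> m = 2" using mt by auto
      ultimately show "DERIV (D m) t :> D (Suc m) t"
        by (auto simp: D_def)
    qed
    have D0: "D 0 = (\<lambda>t. ln (1+t))" by (simp add: D_def)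
    from Taylor_up[OF _ D0 deriv, of 0] z
    obtain t where t: "0 < t" "t < z"
      and eq: "ln (1+z) = (\<Sum>m<3. D m 0 / fact m * (z - 0)^m) + D 3 t / fact 3 * (z - 0)^3"
      by auto
    have "(\<Sum>m<3. D m 0 / fact m * (z - 0)^m) = z - z^2/2"
      by (simp add: D_def eval_nat_numeral fact_numeral)
    moreover have "D 3 t / fact 3 * (z - 0)^3 = z^3 / (3 * (1+t)^3)"
      by (simp add: D_def fact_numeral eval_nat_numeral)
    moreover have "z^3 / (3 * (1+t)^3) \<le> z^3/3"
      using t z by (intro divide_left_mono) auto
    ultimately show ?thesis using eq t z by simp
  qed
  thus "z - z^2/2 \<le> ln (1+z)" and "ln (1+z) \<le> z - z^2/2 + z^3/3" by auto
qed

lemma ln_one_plus_scaling_defect: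
  fixes u p :: real assumes u: "0 < u" and p: "0 < p" "p \<le> 1"
  shows "\<bar>p * ln (1+u) - ln (1 + p*u) - (p^2 - p)/2 * u^2\<bar> \<le> u^3"
proof -
  have pu: "p*u \<ge> 0" using u p by simp
  have "p * (u - u^2/2) \<le> p * ln (1+u)" "p * ln (1+u) \<le> p * (u - u^2/2 + u^3/3)"
    using ln_one_plus_bounds[of u] u p by (auto intro: mult_left_mono)
  moreover note ln_one_plus_bounds[OF pu]
  moreover have "p^3 * u^3 / 3 \<le> u^3" "p * u^3 / 3 \<le> u^3"
    using p u power_le_one[of p 3] by (simp_all add: mult_right_le_one_le order_trans)
  ultimately show ?thesis
    by (simp add: abs_le_iff field_simps power2_eq_square power3_eq_cube)
qed

lemma abs_exp_minus_one_minus_le: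
  fixes L :: real assumes "\<bar>L\<bar> \<le> 1/2"
  shows "\<bar>exp L - 1 - L\<bar> \<le> L^2"
proof -
  obtain t where t: "\<bar>t\<bar> \<le> \<bar>L\<bar>" and eq: "exp L = (\<Sum>m<2. L^m / fact m) + exp t / fact 2 * L^2"
    using Maclaurin_exp_le[of L 2] by blast
  have "exp t \<le> 1 + 2 * \<bar>t\<bar>" using exp_bound_lemma[of t] t assms by simp
  hence "exp t \<le> 2" using t assms by linarith
  hence "exp t / 2 * L^2 \<le> 1 * L^2" by (intro mult_right_mono) auto
  thus ?thesis using eq by (simp add: eval_nat_numeral)
qed

section \<open>The ratio \<open>\<Gamma>(x + p) / \<Gamma>(x)\<close>\<close>

lemma sum_inverse_square_upper:
  fixes x :: real assumes "x > 1/2"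
  shows "(\<Sum>k\<le>n. 1/(x + real k)^2) \<le> 1/(x - 1/2) - 1/(x + real n + 1/2)"
proof -
  have telescope: "1/y^2 \<le> 1/(y - 1/2) - 1/(y + 1/2)" if "y > 1/2" for y :: real
  proof -
    have "y^2 - 1/4 > 0" using mult_strict_mono[of "1/2" y "1/2" y] that
      by (simp add: power2_eq_square)
    hence "1/y^2 \<le> 1/(y^2 - 1/4)" by (intro divide_left_mono) (auto intro!: mult_pos_pos)
    also have "1/(y^2 - 1/4) = 1/(y - 1/2) - 1/(y + 1/2)"
      using that by (simp add: field_simps power2_eq_square)
    finally show ?thesis .
  qed
  show ?thesis
  proof (induction n)
    case 0 thus ?case using telescope[of x] assms by simp
  next
    case (Suc n)
    have "1/(x + real (Suc n))^2 \<le> 1/(x + real n + 1/2) - 1/(x + real (Suc n) + 1/2)"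
      using telescope[of "x + real (Suc n)"] assms by (simp add: algebra_simps)
    thus ?case using Suc by (simp add: algebra_simps)
  qed
qed

corollary sum_inverse_square_le:
  fixes x :: real assumes "x > 1/2"
  shows "(\<Sum>k\<le>n. 1/(x + real k)^2) \<le> 1/(x - 1/2)"
proof -
  have "1/(x + real n + 1/2) \<ge> 0" using assms by simp
  thus ?thesis using sum_inverse_square_upper[OF assms, of n] by linarith
qed

lemma sum_inverse_square_lower:
  fixes x :: real assumes "x > 0"
  shows "1/x - 1/(x + real n + 1) \<le> (\<Sum>k\<le>n. 1/(x + real k)^2)"
proof -
  have telescope: "1/y - 1/(y + 1) \<le> 1/y^2" if "y > 0" for y :: real
  proof -
    have "1/(y^2 + y) \<le> 1/y^2"
      using that by (intro divide_left_mono) (auto intro!: mult_pos_pos add_pos_pos)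
    thus ?thesis using that by (simp add: field_simps power2_eq_square)
  qed
  show ?thesis
  proof (induction n)
    case 0 thus ?case using telescope[of x] assms by simp
  next
    case (Suc n)
    thus ?case using telescope[of "x + real (Suc n)"] assms by (simp add: algebra_simps)
  qed
qed

lemma sum_inverse_cube_upper:
  fixes x :: real assumes x: "x \<ge> 1"
  shows "(\<Sum>k\<le>n. 1/(x + real k)^3) \<le> 2/x^2"
proof -
  have "(\<Sum>k\<le>n. 1/(x + real k)^3) \<le> (\<Sum>k\<le>n. 1/x * (1/(x + real k)^2))"
  proof (intro sum_mono)
    fix k
    have "1/(x + real k)^3 = 1/(x + real k) * (1/(x + real k)^2)"
      by (simp add: power3_eq_cube power2_eq_square)
    also have "\<dots> \<le> 1/x * (1/(x + real k)^2)"
      using x by (intro mult_right_mono divide_left_mono) auto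
    finally show "1/(x + real k)^3 \<le> 1/x * (1/(x + real k)^2)" .
  qed
  also have "\<dots> = 1/x * (\<Sum>k\<le>n. 1/(x + real k)^2)" by (simp add: sum_distrib_left)
  also have "\<dots> \<le> 1/x * (1/(x - 1/2))"
    using sum_inverse_square_le[of x n] x by (intro mult_left_mono) auto
  also have "\<dots> \<le> 2/x^2" using x by (simp add: field_simps power2_eq_square)
  finally show ?thesis .
qed

lemma ln_Gamma_series:
  fixes z :: real assumes z: "z > 0" and n: "n > 0"
  shows "ln (Gamma_series z n) = ln (fact n) + z * ln (real n) - (\<Sum>k\<le>n. ln (z + real k))"
proof -
  have "pochhammer z (n+1) = (\<Prod>k\<le>n. z + real k)"
    by (simp add: pochhammer_Suc_prod atLeast0AtMost)
  hence "ln (pochhammer z (n+1)) = (\<Sum>k\<le>n. ln (z + real k))"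
    using z by (simp add: ln_prod)
  moreover have "pochhammer z (n+1) > 0" using z by (intro pochhammer_pos)
  ultimately show ?thesis
    unfolding Gamma_series_def by (simp add: ln_div ln_mult)
qed

definition lgamma_increment :: "real \<Rightarrow> real \<Rightarrow> real" where
  "lgamma_increment p y = p * ln (1 + 1/y) - ln (1 + p/y)"

lemma lgamma_increment_approx:
  fixes y p :: real assumes "y > 0" and "0 < p" "p \<le> 1"
  shows "\<bar>lgamma_increment p y - (p^2 - p)/2 / y^2\<bar> \<le> 1 / y^3"
  using ln_one_plus_scaling_defect[of "1/y" p] assms
  by (simp add: lgamma_increment_def power_one_over)

text \<open>Gauss's product formula for \<open>\<Gamma>\<close>, in logarithmic form.\<close>

lemma lgamma_increment_sum_tendsto:
  fixes x p :: real assumes x: "x > 0" and p: "p > 0"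
  shows "(\<lambda>n. \<Sum>k\<le>n. lgamma_increment p (x + real k))
           \<longlonglongrightarrow> ln (Gamma (x+p)) - ln (Gamma x) - p * ln x"
proof -
  define G where "G n = ln (Gamma_series (x+p) n) - ln (Gamma_series x n) - p * ln x
      + p * (ln (x + real n + 1) - ln (real n))" for n
  have increment: "lgamma_increment p (x + real k)
      = p * (ln (x + real (Suc k)) - ln (x + real k)) - (ln (x + p + real k) - ln (x + real k))" for k
  proof -
    have y: "x + real k > 0" using x by simp
    have "1 + 1/(x + real k) = (x + real (Suc k)) / (x + real k)"
      "1 + p/(x + real k) = (x + p + real k) / (x + real k)"
      using y by (simp_all add: field_simps)
    thus ?thesis unfolding lgamma_increment_def using y x p by (simp add: ln_div add_pos_pos)
  qed
  have partial_sum: "(\<Sum>k\<le>n. lgamma_increment p (x + real k)) = G n" if n: "n > 0" for n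
  proof -
    have tel: "(\<Sum>k\<le>n. ln (x + real (Suc k)) - ln (x + real k)) = ln (x + real n + 1) - ln x"
      using sum_lessThan_telescope[of "\<lambda>k. ln (x + real k)" "Suc n"]
      by (simp add: lessThan_Suc_atMost algebra_simps)
    have "x + p > 0" using x p by simp
    have "(\<Sum>k\<le>n. lgamma_increment p (x + real k))
        = p * (\<Sum>k\<le>n. ln (x + real (Suc k)) - ln (x + real k))
          - ((\<Sum>k\<le>n. ln (x + p + real k)) - (\<Sum>k\<le>n. ln (x + real k)))"
      unfolding increment by (simp add: sum_subtractf sum_distrib_left right_diff_distrib)
    also have "\<dots> = G n"
      unfolding tel G_def ln_Gamma_series[OF x n] ln_Gamma_series[OF \<open>x + p > 0\<close> n]
      by (simp add: algebra_simps)
    finally show ?thesis .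
  qed
  have "eventually (\<lambda>n. G n = (\<Sum>k\<le>n. lgamma_increment p (x + real k))) sequentially"
    using eventually_gt_at_top[of "0::nat"] by eventually_elim (simp add: partial_sum)
  moreover have "G \<longlonglongrightarrow> ln (Gamma (x+p)) - ln (Gamma x) - p * ln x + p * 0"
  proof -
    have "Gamma (x+p) > 0" "Gamma x > 0" using x p by (simp_all add: Gamma_real_pos)
    moreover have "((\<lambda>y. ln (x + y + 1) - ln y) \<longlongrightarrow> 0) at_top" by real_asymp
    from filterlim_compose[OF this filterlim_real_sequentially]
    have "(\<lambda>n. ln (x + real n + 1) - ln (real n)) \<longlonglongrightarrow> 0" by (simp add: o_def)
    ultimately show ?thesis
      unfolding G_def by (intro tendsto_intros Gamma_series_LIMSEQ) auto
  qed
  ultimately show ?thesis by (simp add: Lim_transform_eventually)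
qed

lemma lgamma_increment_partial_sum_bounds:
  fixes x p :: real assumes x: "x \<ge> 1" and p: "0 < p" "p \<le> 1"
  defines "c \<equiv> (p^2 - p)/2"
  shows "c/x - 3/x^2 \<le> (\<Sum>k\<le>n. lgamma_increment p (x + real k))"
    and "(\<Sum>k\<le>n. lgamma_increment p (x + real k)) \<le> c * (1/x - 1/(x + real n + 1)) + 2/x^2"
proof -
  have c: "-1 \<le> c" "c \<le> 0" unfolding c_def using half_p_sq_minus_p_bounds[OF p] .
  define Q2 where "Q2 = (\<Sum>k\<le>n. 1/(x + real k)^2)"
  have "\<bar>(\<Sum>k\<le>n. lgamma_increment p (x + real k)) - c * Q2\<bar>
      = \<bar>\<Sum>k\<le>n. lgamma_increment p (x + real k) - c / (x + real k)^2\<bar>"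
    unfolding Q2_def by (simp add: sum_subtractf sum_distrib_left)
  also have "\<dots> \<le> (\<Sum>k\<le>n. 1/(x + real k)^3)"
    unfolding c_def using x p
    by (intro order_trans[OF sum_abs] sum_mono lgamma_increment_approx) auto
  also have "\<dots> \<le> 2/x^2" by (rule sum_inverse_cube_upper[OF x])
  finally have close: "\<bar>(\<Sum>k\<le>n. lgamma_increment p (x + real k)) - c * Q2\<bar> \<le> 2/x^2" .
  have "c * (1/x + 1/x^2) \<le> c * (1/(x - 1/2))"
    using c x by (intro mult_left_mono_neg) (auto simp: field_simps power2_eq_square)
  also have "\<dots> \<le> c * Q2"
    using c x sum_inverse_square_le[of x n] by (intro mult_left_mono_neg) (auto simp: Q2_def)
  finally have "c/x + c/x^2 \<le> c * Q2" by (simp add: algebra_simps)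
  moreover have "-1/x^2 \<le> c/x^2" using c x by (simp add: divide_simps)
  ultimately show "c/x - 3/x^2 \<le> (\<Sum>k\<le>n. lgamma_increment p (x + real k))"
    using close by (simp add: abs_le_iff diff_divide_distrib)
  have "c * Q2 \<le> c * (1/x - 1/(x + real n + 1))"
    using c x sum_inverse_square_lower[of x n] by (intro mult_left_mono_neg) (auto simp: Q2_def)
  thus "(\<Sum>k\<le>n. lgamma_increment p (x + real k)) \<le> c * (1/x - 1/(x + real n + 1)) + 2/x^2"
    using close by (simp add: abs_le_iff)
qed

lemma ln_Gamma_shift_bound:
  fixes x p :: real assumes x: "x \<ge> 1" and p: "0 < p" "p \<le> 1"
  shows "\<bar>ln (Gamma (x+p)) - ln (Gamma x) - p * ln x - ((p^2 - p)/2) / x\<bar> \<le> 3 / x^2"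
proof -
  define c where "c = (p^2 - p)/2"
  define T where "T n = (\<Sum>k\<le>n. lgamma_increment p (x + real k))" for n
  define L where "L = ln (Gamma (x+p)) - ln (Gamma x) - p * ln x"
  have lim: "T \<longlonglongrightarrow> L"
    unfolding T_def L_def using lgamma_increment_sum_tendsto x p by simp
  have "c/x - 3/x^2 \<le> L"
    using lim lgamma_increment_partial_sum_bounds(1)[OF x p]
    by (intro LIMSEQ_le_const) (auto simp: T_def c_def)
  moreover have "L \<le> c * (1/x - 0) + 2/x^2"
  proof (rule LIMSEQ_le[OF lim])
    have "((\<lambda>y. 1/(x + y + 1)) \<longlongrightarrow> 0) at_top" by real_asymp
    from filterlim_compose[OF this filterlim_real_sequentially]
    have "(\<lambda>n. 1/(x + real n + 1)) \<longlonglongrightarrow> 0" by (simp add: o_def)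
    thus "(\<lambda>n. c * (1/x - 1/(x + real n + 1)) + 2/x^2) \<longlonglongrightarrow> c * (1/x - 0) + 2/x^2"
      by (intro tendsto_intros)
    show "\<exists>N. \<forall>n\<ge>N. T n \<le> c * (1/x - 1/(x + real n + 1)) + 2/x^2"
      using lgamma_increment_partial_sum_bounds(2)[OF x p] by (auto simp: T_def c_def)
  qed
  ultimately show ?thesis unfolding L_def c_def by (simp add: abs_le_iff)
qed

lemma Gamma_ratio_expansion:
  fixes x p :: real assumes x: "x \<ge> 8" and p: "0 < p" "p \<le> 1"
  shows "\<bar>Gamma (x+p) / Gamma x - x powr p * (1 + ((p^2 - p)/2) / x)\<bar> \<le> 19 * x powr (p - 2)"
proof -
  define c where "c = (p^2 - p)/2"
  define L where "L = ln (Gamma (x+p)) - ln (Gamma x) - p * ln x"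
  have x0: "x > 0" using x by simp
  have LB: "\<bar>L - c/x\<bar> \<le> 3/x^2"
    unfolding L_def c_def using ln_Gamma_shift_bound[of x p] x p by simp
  have "-1/x \<le> c/x" "c/x \<le> 0"
    unfolding c_def using half_p_sq_minus_p_bounds[OF p] x0 by (simp_all add: divide_simps)
  moreover have "3/x^2 \<le> 3/x" using x by (intro divide_left_mono) (auto simp: power2_eq_square)
  ultimately have L4: "\<bar>L\<bar> \<le> 4/x" using LB by (simp add: abs_le_iff)
  also have "4/x \<le> 1/2" using x by (simp add: divide_simps)
  finally have "\<bar>exp L - 1 - L\<bar> \<le> L^2" by (rule abs_exp_minus_one_minus_le)
  also have "L^2 \<le> (4/x)^2" using L4 power_mono[of "\<bar>L\<bar>" "4/x" 2] by simp
  finally have "\<bar>exp L - (1 + c/x)\<bar> \<le> 19/x^2"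
    using LB by (simp add: abs_le_iff power_divide)
  moreover have "Gamma (x+p) / Gamma x = x powr p * exp L"
    unfolding L_def using x0 p by (simp add: Gamma_real_pos exp_diff powr_def)
  ultimately have "\<bar>Gamma (x+p) / Gamma x - x powr p * (1 + c/x)\<bar> \<le> x powr p * (19/x^2)"
    by (simp add: abs_mult mult_left_mono flip: right_diff_distrib times_divide_eq_right)
  also have "x powr p * (19/x^2) = 19 * x powr (p - 2)"
    using x0 by (simp add: powr_diff powr_numeral)
  finally show ?thesis unfolding c_def .
qed

section \<open>Moments of the symmetric binomial distribution\<close>

lemma sum_choose_Suc_pascal:
  fixes f :: "nat \<Rightarrow> real"
  shows "(\<Sum>n\<le>Suc d. real (Suc d choose n) * f n) = (\<Sum>n\<le>d. real (d choose n) * (f n + f (Suc n)))"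
proof -
  have "(\<Sum>n\<le>Suc d. real (Suc d choose n) * f n)
      = f 0 + (\<Sum>n\<le>d. real (d choose n) * f (Suc n)) + (\<Sum>n\<le>d. real (d choose Suc n) * f (Suc n))"
    by (subst sum.atMost_Suc_shift) (simp add: sum.distrib algebra_simps)
  moreover have "f 0 + (\<Sum>n\<le>d. real (d choose Suc n) * f (Suc n)) = (\<Sum>n\<le>Suc d. real (d choose n) * f n)"
    by (subst sum.atMost_Suc_shift) simp
  moreover have "(\<Sum>n\<le>Suc d. real (d choose n) * f n) = (\<Sum>n\<le>d. real (d choose n) * f n)"
    by (simp add: sum.atMost_Suc)
  ultimately show ?thesis by (simp add: sum.distrib algebra_simps)
qed

definition binomial_central_sum :: "nat \<Rightarrow> nat \<Rightarrow> real" where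
  "binomial_central_sum k d = (\<Sum>n\<le>d. real (d choose n) * (2 * real n - real d) ^ k)"

lemma binomial_central_sum_Suc:
  "binomial_central_sum k (Suc d) =
     (\<Sum>n\<le>d. real (d choose n) * ((2 * real n - real d - 1) ^ k + (2 * real n - real d + 1) ^ k))"
  unfolding binomial_central_sum_def by (subst sum_choose_Suc_pascal) (simp add: algebra_simps)

lemma binomial_central_sum_0: "binomial_central_sum 0 d = 2 ^ d"
  unfolding binomial_central_sum_def using choose_row_sum[of d] by (simp flip: of_nat_sum)

lemma binomial_central_sum_1: "binomial_central_sum 1 d = 0"
proof (induction d)
  case (Suc d)
  have "binomial_central_sum 1 (Suc d) = 2 * binomial_central_sum 1 d"
    unfolding binomial_central_sum_Suc
    by (simp add: binomial_central_sum_def sum_distrib_left algebra_simps)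
  thus ?case using Suc by simp
qed (simp add: binomial_central_sum_def)

lemma binomial_central_sum_2: "binomial_central_sum 2 d = real d * 2 ^ d"
proof (induction d)
  case (Suc d)
  have e: "(y - 1) ^ 2 + (y + 1) ^ 2 = 2 * y^2 + 2" for y :: real
    by algebra
  have "binomial_central_sum 2 (Suc d)
      = (\<Sum>n\<le>d. real (d choose n) * (2 * (2 * real n - real d) ^ 2 + 2))"
    unfolding binomial_central_sum_Suc using e[of "2 * real _ - real d"]
    by (simp add: diff_diff_eq2 algebra_simps)
  also have "\<dots> = 2 * binomial_central_sum 2 d + 2 * binomial_central_sum 0 d"
    unfolding binomial_central_sum_def by (simp add: sum_distrib_left sum.distrib algebra_simps)
  finally show ?case using Suc by (simp add: binomial_central_sum_0 algebra_simps)
qed (simp add: binomial_central_sum_def)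

lemma binomial_central_sum_4: "binomial_central_sum 4 d = (3 * (real d)^2 - 2 * real d) * 2 ^ d"
proof (induction d)
  case (Suc d)
  have e: "(y - 1) ^ 4 + (y + 1) ^ 4 = 2 * y^4 + 12 * y^2 + 2" for y :: real
    by algebra
  have "binomial_central_sum 4 (Suc d) = (\<Sum>n\<le>d. real (d choose n) *
      (2 * (2 * real n - real d) ^ 4 + 12 * (2 * real n - real d) ^ 2 + 2))"
    unfolding binomial_central_sum_Suc using e[of "2 * real _ - real d"]
    by (simp add: diff_diff_eq2 algebra_simps)
  also have "\<dots> = 2 * binomial_central_sum 4 d + 12 * binomial_central_sum 2 d
      + 2 * binomial_central_sum 0 d"
    unfolding binomial_central_sum_def by (simp add: sum_distrib_left sum.distrib algebra_simps)
  finally show ?case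
    using Suc by (simp add: binomial_central_sum_0 binomial_central_sum_2 algebra_simps power2_eq_square)
qed (simp add: binomial_central_sum_def)

definition binom_weight :: "nat \<Rightarrow> nat \<Rightarrow> real" where
  "binom_weight d n = real (d choose n) / 2^d"

definition binom_dev :: "nat \<Rightarrow> nat \<Rightarrow> real" where
  "binom_dev d n = (2 * real n - real d) / real d"

lemma binom_weight_nonneg: "binom_weight d n \<ge> 0"
  by (simp add: binom_weight_def)

lemma binom_dev_moment:
  "(\<Sum>n\<le>d. binom_weight d n * binom_dev d n ^ k) = binomial_central_sum k d / (2^d * real d ^ k)"
  unfolding binomial_central_sum_def binom_weight_def binom_dev_def
  by (simp add: sum_divide_distrib power_divide)

lemma binom_weight_sum: "(\<Sum>n\<le>d. binom_weight d n) = 1"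
proof -
  have "(\<Sum>n\<le>d. binom_weight d n) = binomial_central_sum 0 d / 2^d"
    using binom_dev_moment[of d 0] by simp
  thus ?thesis by (simp add: binomial_central_sum_0)
qed

lemma binom_dev_mean: "(\<Sum>n\<le>d. binom_weight d n * binom_dev d n) = 0"
  using binom_dev_moment[of d 1] binomial_central_sum_1[of d] by simp

lemma binom_dev_variance:
  assumes "d > 0" shows "(\<Sum>n\<le>d. binom_weight d n * binom_dev d n ^ 2) = 1 / real d"
  using binom_dev_moment[of d 2] assms by (simp add: binomial_central_sum_2 power2_eq_square)

lemma binom_dev_fourth_moment_le:
  assumes "d > 0" shows "(\<Sum>n\<le>d. binom_weight d n * binom_dev d n ^ 4) \<le> 3 / (real d)^2"
proof -
  have "(\<Sum>n\<le>d. binom_weight d n * binom_dev d n ^ 4) = (3 * (real d)^2 - 2 * real d) / real d ^ 4"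
    using binom_dev_moment[of d 4] by (simp add: binomial_central_sum_4)
  also have "\<dots> \<le> (3 * (real d)^2) / real d ^ 4"
    by (intro divide_right_mono) auto
  also have "\<dots> = 3 / (real d)^2" using assms by (simp add: field_simps eval_nat_numeral)
  finally show ?thesis .
qed

lemma abs_le_amgm:
  fixes x l :: real assumes "l > 0" shows "\<bar>x\<bar> \<le> (l * x^2 + 1/l) / 2"
proof -
  have "0 \<le> (l * \<bar>x\<bar> - 1)^2" by simp
  hence "2 * l * \<bar>x\<bar> \<le> l^2 * x^2 + 1" by (simp add: power2_eq_square algebra_simps)
  thus ?thesis using assms by (simp add: field_simps power2_eq_square)
qed

lemma abs_cube_le_amgm:
  fixes x l :: real assumes "l > 0" shows "\<bar>x\<bar>^3 \<le> (l * x^4 + x^2/l) / 2"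
proof -
  have "\<bar>x\<bar> * x^2 \<le> ((l * x^2 + 1/l) / 2) * x^2"
    using abs_le_amgm[OF assms, of x] by (intro mult_right_mono) auto
  thus ?thesis by (simp add: field_simps eval_nat_numeral abs_mult_self_eq)
qed

text \<open>Both absolute moments follow from the even ones by AM-GM with weight \<open>\<surd>d\<close>.\<close>

lemma binom_dev_abs_mean_le:
  assumes d: "d > 0" shows "(\<Sum>n\<le>d. binom_weight d n * \<bar>binom_dev d n\<bar>) \<le> 1 / sqrt (real d)"
proof -
  define l where "l = sqrt (real d)"
  have l: "l > 0" "l^2 = real d" using d by (simp_all add: l_def)
  have "(\<Sum>n\<le>d. binom_weight d n * \<bar>binom_dev d n\<bar>)
      \<le> (\<Sum>n\<le>d. binom_weight d n * ((l * binom_dev d n ^ 2 + 1/l) / 2))"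
    by (intro sum_mono mult_left_mono abs_le_amgm l binom_weight_nonneg)
  also have "\<dots> = (\<Sum>n\<le>d. (l * (binom_weight d n * binom_dev d n ^ 2) + 1/l * binom_weight d n) / 2)"
    by (intro sum.cong refl) (simp add: algebra_simps)
  also have "\<dots> = (l * (\<Sum>n\<le>d. binom_weight d n * binom_dev d n ^ 2)
      + 1/l * (\<Sum>n\<le>d. binom_weight d n)) / 2"
    by (simp only: sum_divide_distrib[symmetric] sum.distrib sum_distrib_left)
  also have "\<dots> = (l / real d + 1/l) / 2" using d by (simp add: binom_weight_sum binom_dev_variance)
  also have "\<dots> = 1 / l" using d l by (simp add: field_simps power2_eq_square)
  finally show ?thesis by (simp add: l_def)
qed

lemma binom_dev_abs_third_moment_le:
  assumes d: "d > 0"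
  shows "(\<Sum>n\<le>d. binom_weight d n * \<bar>binom_dev d n\<bar>^3) \<le> 2 / (real d * sqrt (real d))"
proof -
  define l where "l = sqrt (real d)"
  have l: "l > 0" "l^2 = real d" using d by (simp_all add: l_def)
  have "(\<Sum>n\<le>d. binom_weight d n * \<bar>binom_dev d n\<bar>^3)
      \<le> (\<Sum>n\<le>d. binom_weight d n * ((l * binom_dev d n ^ 4 + binom_dev d n ^ 2 / l) / 2))"
    by (intro sum_mono mult_left_mono abs_cube_le_amgm l binom_weight_nonneg)
  also have "\<dots> = (\<Sum>n\<le>d. (l * (binom_weight d n * binom_dev d n ^ 4)
      + 1/l * (binom_weight d n * binom_dev d n ^ 2)) / 2)"
    by (intro sum.cong refl) (simp add: algebra_simps)
  also have "\<dots> = (l * (\<Sum>n\<le>d. binom_weight d n * binom_dev d n ^ 4)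
      + 1/l * (\<Sum>n\<le>d. binom_weight d n * binom_dev d n ^ 2)) / 2"
    by (simp only: sum_divide_distrib[symmetric] sum.distrib sum_distrib_left)
  also have "\<dots> \<le> (l * (3 / (real d)^2) + 1/l * (1 / real d)) / 2"
    using l binom_dev_fourth_moment_le[OF d] binom_dev_variance[OF d]
    by (intro divide_right_mono add_mono mult_left_mono) auto
  also have "\<dots> = 2 / (real d * l)"
    using l unfolding l(2)[symmetric] by (simp add: field_simps eval_nat_numeral)
  finally show ?thesis by (simp add: l_def)
qed

lemma abs_binom_expectation_le:
  assumes "\<And>n. n \<le> d \<Longrightarrow> \<bar>f n\<bar> \<le> g n"
  shows "\<bar>\<Sum>n\<le>d. binom_weight d n * f n\<bar> \<le> (\<Sum>n\<le>d. binom_weight d n * g n)"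
proof -
  have "\<bar>\<Sum>n\<le>d. binom_weight d n * f n\<bar> \<le> (\<Sum>n\<le>d. binom_weight d n * \<bar>f n\<bar>)"
    using sum_abs[of "\<lambda>n. binom_weight d n * f n"] by (simp add: abs_mult binom_weight_nonneg)
  also have "\<dots> \<le> (\<Sum>n\<le>d. binom_weight d n * g n)"
    using assms by (intro sum_mono mult_left_mono binom_weight_nonneg) auto
  finally show ?thesis .
qed

section \<open>Expansion of \<open>I0\<close>\<close>

text \<open>\<open>chi_moment p n\<close> is the \<open>p\<close>-th moment of a chi-squared variable with \<open>n\<close> degrees of freedom,
  i.e. \<open>E \<parallel>Z\<parallel>^(2p)\<close> for \<open>Z \<sim> N(0, I_n)\<close>.  For \<open>n = 0\<close> it is the junk value \<open>0\<close> since \<open>Gamma 0 = 0\<close>.\<close>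

definition chi_moment :: "real \<Rightarrow> nat \<Rightarrow> real" where
  "chi_moment p n = 2 powr p * Gamma (real n / 2 + p) / Gamma (real n / 2)"

definition chi_moment_remainder :: "real \<Rightarrow> nat \<Rightarrow> real" where
  "chi_moment_remainder p n =
     (if n = 0 then 0 else chi_moment p n - real n powr p - p * (p - 1) * real n powr (p - 1))"

lemma chi_moment_remainder_le:
  assumes p: "0 < p" "p \<le> 1" and n: "n \<ge> 16"
  shows "\<bar>chi_moment_remainder p n\<bar> \<le> 76 * real n powr (p - 2)"
proof -
  define x where "x = real n / 2"
  have x: "x \<ge> 8" and nx: "real n = 2 * x" using n by (simp_all add: x_def)
  have "chi_moment p n - real n powr p - p * (p - 1) * real n powr (p - 1)
      = 2 powr p * (Gamma (x+p) / Gamma x - x powr p * (1 + ((p^2 - p)/2) / x))"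
    using x unfolding chi_moment_def x_def[symmetric] nx
    by (simp add: powr_mult powr_diff field_simps power2_eq_square)
  hence "\<bar>chi_moment_remainder p n\<bar>
      = 2 powr p * \<bar>Gamma (x+p) / Gamma x - x powr p * (1 + ((p^2 - p)/2) / x)\<bar>"
    using n by (simp add: chi_moment_remainder_def abs_mult)
  also have "\<dots> \<le> 2 powr p * (19 * x powr (p - 2))"
    using Gamma_ratio_expansion[OF x p] by (intro mult_left_mono) auto
  also have "\<dots> = 76 * real n powr (p - 2)"
    using x unfolding nx by (simp add: powr_mult powr_diff powr_numeral field_simps power2_eq_square)
  finally show ?thesis .
qed

lemma chi_moment_remainder_bounded:
  assumes p: "0 < p" "p \<le> 1"
  obtains M where "M \<ge> 0" and "\<And>n. \<bar>chi_moment_remainder p n\<bar> \<le> M"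
proof
  define M where "M = (\<Sum>k<16. \<bar>chi_moment_remainder p k\<bar>) + 76"
  show "M \<ge> 0" by (simp add: M_def sum_nonneg)
  fix n
  show "\<bar>chi_moment_remainder p n\<bar> \<le> M"
  proof (cases "n < 16")
    case True
    hence "\<bar>chi_moment_remainder p n\<bar> \<le> (\<Sum>k<16. \<bar>chi_moment_remainder p k\<bar>)"
      by (intro member_le_sum) auto
    thus ?thesis by (simp add: M_def)
  next
    case False
    hence "\<bar>chi_moment_remainder p n\<bar> \<le> 76 * real n powr (p - 2)"
      using chi_moment_remainder_le[OF p] by simp
    also have "real n powr (p - 2) \<le> 1 powr (p - 2)"
      using False p by (intro powr_mono2') auto
    finally show ?thesis by (simp add: M_def sum_nonneg add_increasing)
  qed
qed

lemma binom_dev_scaling: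
  assumes "d > 0"
  shows "real n = real d / 2 * (1 + binom_dev d n)" and "binom_dev d n \<ge> -1"
  using assms by (simp_all add: binom_dev_def field_simps)

lemma fourth_power_ge_of_abs_ge_half:
  fixes x :: real assumes "\<bar>x\<bar> \<ge> 1/2" shows "1 \<le> 16 * x^4"
proof -
  have "(1/2)^4 \<le> \<bar>x\<bar>^4" using assms by (intro power_mono) auto
  thus ?thesis by (simp add: power_abs power_divide)
qed

lemma powr_binom_dev_expansion:
  fixes p :: real and d n :: nat assumes p: "0 < p" "p \<le> 1" and d: "d > 0"
  defines "mu \<equiv> real d / 2" and "x \<equiv> binom_dev d n"
  shows "\<bar>real n powr p - mu powr p * (1 + p*x + (p^2-p)/2*x^2)\<bar> \<le> 36 * mu powr p * \<bar>x\<bar>^3"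
proof -
  have "real n = mu * (1 + x)" unfolding mu_def x_def by (rule binom_dev_scaling(1)[OF d])
  moreover have "mu \<ge> 0" "1 + x \<ge> 0"
    using binom_dev_scaling(2)[OF d, of n] by (simp_all add: mu_def x_def)
  ultimately have "real n powr p = mu powr p * (1+x) powr p" by (simp add: powr_mult)
  hence "\<bar>real n powr p - mu powr p * (1 + p*x + (p^2-p)/2*x^2)\<bar>
      = mu powr p * \<bar>(1+x) powr p - (1 + p*x + (p^2-p)/2*x^2)\<bar>"
    by (simp add: abs_mult flip: right_diff_distrib)
  also have "\<dots> \<le> mu powr p * (36 * \<bar>x\<bar>^3)"
    using binom_dev_scaling(2)[OF d, of n] unfolding x_def
    by (intro mult_left_mono powr_second_order_bound p) auto
  finally show ?thesis by simp
qed

lemma powr_pred_binom_dev_bound: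
  fixes p :: real and d n :: nat assumes p: "0 < p" "p \<le> 1" and d: "d > 0"
  defines "mu \<equiv> real d / 2" and "x \<equiv> binom_dev d n"
  shows "\<bar>real n powr (p-1) - mu powr (p-1)\<bar> \<le> 4 * mu powr (p-1) * \<bar>x\<bar> + 16 * x^4"
proof (cases "x \<ge> -1/2")
  case True
  have "real n = mu * (1 + x)" unfolding mu_def x_def by (rule binom_dev_scaling(1)[OF d])
  moreover have "mu \<ge> 0" "1 + x \<ge> 0"
    using binom_dev_scaling(2)[OF d, of n] by (simp_all add: mu_def x_def)
  ultimately have "real n powr (p-1) = mu powr (p-1) * (1+x) powr (p-1)" by (simp add: powr_mult)
  hence "\<bar>real n powr (p-1) - mu powr (p-1)\<bar> = \<bar>mu powr (p-1) * ((1+x) powr (p-1) - 1)\<bar>"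
    by (simp add: algebra_simps)
  also have "\<dots> = mu powr (p-1) * \<bar>(1+x) powr (p-1) - 1\<bar>" by (simp add: abs_mult)
  also have "\<dots> \<le> mu powr (p-1) * (4 * \<bar>x\<bar>)"
    by (intro mult_left_mono powr_first_order_bound p True) auto
  also have "\<dots> \<le> 4 * mu powr (p-1) * \<bar>x\<bar> + 16 * x^4" by simp
  finally show ?thesis .
next
  case False
  hence x: "\<bar>x\<bar> \<ge> 1/2" by simp
  have "real n powr (p-1) \<le> 1"
  proof (cases "n = 0")
    case False
    hence "real n powr (p-1) \<le> 1 powr (p-1)" using p by (intro powr_mono2') auto
    thus ?thesis by simp
  qed simp
  moreover have "mu powr (p-1) * 1 \<le> mu powr (p-1) * (4 * \<bar>x\<bar>)"
    using x by (intro mult_left_mono) auto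
  hence "mu powr (p-1) \<le> 4 * mu powr (p-1) * \<bar>x\<bar>" by simp
  moreover note fourth_power_ge_of_abs_ge_half[OF x]
  moreover have "0 \<le> real n powr (p-1)" "0 \<le> mu powr (p-1)" by simp_all
  ultimately show ?thesis unfolding abs_le_iff by linarith
qed

lemma chi_moment_remainder_binom_bound:
  fixes p M :: real and d n :: nat
  assumes p: "0 < p" "p \<le> 1" and d: "d \<ge> 64"
    and M: "M \<ge> 0" "\<And>n. \<bar>chi_moment_remainder p n\<bar> \<le> M"
  defines "mu \<equiv> real d / 2" and "x \<equiv> binom_dev d n"
  shows "\<bar>chi_moment_remainder p n\<bar> \<le> 304 * mu powr (p-2) + 16 * M * x^4"
proof (cases "x \<ge> -1/2")
  case True
  have "real n = mu * (1 + x)" unfolding mu_def x_def using d by (intro binom_dev_scaling(1)) simp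
  moreover have "mu * (1/2) \<le> mu * (1 + x)" using True by (intro mult_left_mono) (auto simp: mu_def)
  ultimately have "mu / 2 \<le> real n" by simp
  moreover have mu: "mu \<ge> 32" using d by (simp add: mu_def)
  ultimately have "\<bar>chi_moment_remainder p n\<bar> \<le> 76 * real n powr (p-2)"
    by (intro chi_moment_remainder_le p) linarith
  also have "real n powr (p-2) \<le> (mu/2) powr (p-2)"
    using p mu \<open>mu / 2 \<le> real n\<close> by (intro powr_mono2') auto
  also have "(mu/2) powr (p-2) = mu powr (p-2) * 2 powr (-(p-2))"
    using mu by (simp add: powr_divide powr_minus_divide del: minus_diff_eq)
  also have "\<dots> \<le> mu powr (p-2) * 2 powr 2"
    using p by (intro mult_left_mono powr_mono) auto
  moreover have "0 \<le> 16 * M * x^4" using M by simp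
  ultimately show ?thesis by simp
next
  case False
  hence "M \<le> 16 * M * x^4"
    using fourth_power_ge_of_abs_ge_half[of x] M mult_left_mono[of 1 "16 * x^4" M] by simp
  thus ?thesis using M(2)[of n] powr_ge_zero[of mu "p-2"] by linarith
qed

lemma chi_moment_decomposition:
  "chi_moment p n = real n powr p + p * (p - 1) * real n powr (p - 1) + chi_moment_remainder p n"
  by (simp add: chi_moment_remainder_def chi_moment_def)

lemma I0_eq_binom_expectation:
  "I0 s d = (\<Sum>n\<le>d. binom_weight d n * chi_moment (s/2) n)"
proof -
  have "{..d} = insert 0 {1..d}" by auto
  hence "(\<Sum>n\<le>d. binom_weight d n * chi_moment (s/2) n)
      = (\<Sum>n=1..d. binom_weight d n * chi_moment (s/2) n)"
    by (simp add: chi_moment_def)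
  also have "\<dots> = I0 s d"
    unfolding I0_def sum_distrib_left binom_weight_def chi_moment_def
    by (intro sum.cong refl) (simp add: powr_minus_divide powr_realpow)
  finally show ?thesis ..
qed

text \<open>The constant \<open>5p(p - 1)/2\<close> collects \<open>(p^2 - p)/2\<close> from the variance term of the expansion
  of \<open>n^p\<close> and \<open>2p(p - 1)\<close> from the correction \<open>p(p - 1) n^(p-1)\<close> evaluated at \<open>n = d/2\<close>.\<close>

lemma I0_minus_leading_terms:
  fixes s :: real and d :: nat
  assumes d: "d > 0"
  defines "p \<equiv> s/2" and "mu \<equiv> real d / 2"
  shows "I0 s d - mu powr p * (1 + (5 * p * (p - 1) / 2) / real d)
    = (\<Sum>n\<le>d. binom_weight d n *
          (real n powr p - mu powr p * (1 + p * binom_dev d n + (p^2 - p)/2 * binom_dev d n ^ 2)))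
      + p * (p - 1) * (\<Sum>n\<le>d. binom_weight d n * (real n powr (p - 1) - mu powr (p - 1)))
      + (\<Sum>n\<le>d. binom_weight d n * chi_moment_remainder p n)"
proof -
  define w where "w = binom_weight d"
  define x where "x = binom_dev d"
  have I0: "I0 s d = (\<Sum>n\<le>d. w n * real n powr p)
      + p * (p - 1) * (\<Sum>n\<le>d. w n * real n powr (p - 1)) + (\<Sum>n\<le>d. w n * chi_moment_remainder p n)"
  proof -
    have "I0 s d = (\<Sum>n\<le>d. w n * real n powr p + p * (p - 1) * (w n * real n powr (p - 1))
        + w n * chi_moment_remainder p n)"
      unfolding I0_eq_binom_expectation chi_moment_decomposition p_def[symmetric] w_def
      by (intro sum.cong refl) (simp add: algebra_simps)
    thus ?thesis by (simp only: sum.distrib sum_distrib_left)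
  qed
  have "(\<Sum>n\<le>d. w n * (mu powr p * (1 + p * x n + (p^2 - p)/2 * x n ^ 2)))
      = mu powr p * ((\<Sum>n\<le>d. w n) + p * (\<Sum>n\<le>d. w n * x n) + (p^2 - p)/2 * (\<Sum>n\<le>d. w n * x n ^ 2))"
    by (simp add: sum.distrib sum_distrib_left algebra_simps)
  also have "\<dots> = mu powr p * (1 + (p^2 - p)/2 / real d)"
    using d by (simp add: w_def x_def binom_weight_sum binom_dev_mean binom_dev_variance)
  finally have quad_term: "(\<Sum>n\<le>d. w n * (mu powr p * (1 + p * x n + (p^2 - p)/2 * x n ^ 2)))
      = mu powr p * (1 + (p^2 - p)/2 / real d)" .
  have const_term: "(\<Sum>n\<le>d. w n * mu powr (p - 1)) = mu powr (p - 1)"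
    by (simp add: w_def binom_weight_sum flip: sum_distrib_right)
  have mu_pred: "mu powr (p - 1) = 2 * mu powr p / real d"
    using d by (simp add: mu_def powr_diff)
  have "mu powr p * (1 + (5 * p * (p - 1) / 2) / real d)
      = mu powr p * (1 + (p^2 - p)/2 / real d) + p * (p - 1) * mu powr (p - 1)"
    unfolding mu_pred using d by (simp add: field_simps power2_eq_square)
  thus ?thesis
    unfolding I0 w_def[symmetric] x_def[symmetric] sum_subtractf right_diff_distrib quad_term const_term
    by (simp add: algebra_simps)
qed

lemma divide_square_le_divide_mult_sqrt:
  fixes a t :: real assumes "t \<ge> 1" "a \<ge> 0"
  shows "a / t^2 \<le> a / (t * sqrt t)"
proof -
  have "sqrt t \<le> sqrt (t * t)" using assms by (intro real_sqrt_le_mono) simp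
  hence "t * sqrt t \<le> t^2" using assms by (simp add: power2_eq_square)
  thus ?thesis using assms by (intro divide_left_mono) auto
qed

lemma binom_taylor_error_le:
  fixes p :: real assumes p: "0 < p" "p \<le> 1" and d: "d > 0"
  defines "mu \<equiv> real d / 2"
  shows "\<bar>\<Sum>n\<le>d. binom_weight d n *
           (real n powr p - mu powr p * (1 + p * binom_dev d n + (p^2 - p)/2 * binom_dev d n ^ 2))\<bar>
         \<le> 72 * mu powr p / (real d * sqrt (real d))"
proof -
  have "\<bar>\<Sum>n\<le>d. binom_weight d n *
           (real n powr p - mu powr p * (1 + p * binom_dev d n + (p^2 - p)/2 * binom_dev d n ^ 2))\<bar>
      \<le> (\<Sum>n\<le>d. binom_weight d n * (36 * mu powr p * \<bar>binom_dev d n\<bar>^3))"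
    unfolding mu_def by (intro abs_binom_expectation_le powr_binom_dev_expansion p d)
  also have "\<dots> = 36 * mu powr p * (\<Sum>n\<le>d. binom_weight d n * \<bar>binom_dev d n\<bar>^3)"
    by (simp add: sum_distrib_left algebra_simps)
  also have "\<dots> \<le> 36 * mu powr p * (2 / (real d * sqrt (real d)))"
    using binom_dev_abs_third_moment_le[OF d] by (intro mult_left_mono) auto
  finally show ?thesis by simp
qed

lemma binom_pred_power_error_le:
  fixes p :: real assumes p: "0 < p" "p \<le> 1" and d: "d \<ge> 2"
  defines "mu \<equiv> real d / 2"
  shows "\<bar>\<Sum>n\<le>d. binom_weight d n * (real n powr (p - 1) - mu powr (p - 1))\<bar>
         \<le> 56 * mu powr p / (real d * sqrt (real d))"
proof -
  have d0: "d > 0" and d1: "real d \<ge> 1" using d by auto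
  have "\<bar>\<Sum>n\<le>d. binom_weight d n * (real n powr (p - 1) - mu powr (p - 1))\<bar>
      \<le> (\<Sum>n\<le>d. binom_weight d n * (4 * mu powr (p-1) * \<bar>binom_dev d n\<bar> + 16 * binom_dev d n ^ 4))"
    unfolding mu_def by (intro abs_binom_expectation_le powr_pred_binom_dev_bound p d0)
  also have "\<dots> = 4 * mu powr (p-1) * (\<Sum>n\<le>d. binom_weight d n * \<bar>binom_dev d n\<bar>)
      + 16 * (\<Sum>n\<le>d. binom_weight d n * binom_dev d n ^ 4)"
    by (simp add: sum_distrib_left sum.distrib algebra_simps)
  also have "\<dots> \<le> 4 * mu powr (p-1) * (1 / sqrt (real d)) + 16 * (3 / (real d)^2)"
    using binom_dev_abs_mean_le[OF d0] binom_dev_fourth_moment_le[OF d0]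
    by (intro add_mono mult_left_mono) auto
  also have "4 * mu powr (p-1) * (1 / sqrt (real d)) = 8 * mu powr p / (real d * sqrt (real d))"
    using d0 by (simp add: mu_def powr_diff field_simps)
  also have "16 * (3 / (real d)^2) \<le> 48 * (mu powr p / (real d)^2)"
  proof -
    have "1 powr p \<le> mu powr p" using d p by (intro powr_mono2) (auto simp: mu_def)
    thus ?thesis by (simp add: divide_right_mono)
  qed
  also have "\<dots> \<le> 48 * (mu powr p / (real d * sqrt (real d)))"
    using divide_square_le_divide_mult_sqrt[OF d1, of "mu powr p"] by simp
  finally show ?thesis by simp
qed

lemma binom_remainder_error_le:
  fixes p M :: real
  assumes p: "0 < p" "p \<le> 1" and d: "d \<ge> 64"
    and M: "M \<ge> 0" "\<And>n. \<bar>chi_moment_remainder p n\<bar> \<le> M"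
  defines "mu \<equiv> real d / 2"
  shows "\<bar>\<Sum>n\<le>d. binom_weight d n * chi_moment_remainder p n\<bar>
         \<le> (1216 + 48 * M) * mu powr p / (real d * sqrt (real d))"
proof -
  have d0: "d > 0" and d1: "real d \<ge> 1" using d by auto
  have "\<bar>\<Sum>n\<le>d. binom_weight d n * chi_moment_remainder p n\<bar>
      \<le> (\<Sum>n\<le>d. binom_weight d n * (304 * mu powr (p-2) + 16 * M * binom_dev d n ^ 4))"
    unfolding mu_def by (intro abs_binom_expectation_le chi_moment_remainder_binom_bound p d M)
  also have "\<dots> = 304 * mu powr (p-2) * (\<Sum>n\<le>d. binom_weight d n)
      + 16 * M * (\<Sum>n\<le>d. binom_weight d n * binom_dev d n ^ 4)"
    by (simp add: sum_distrib_left sum_distrib_right sum.distrib algebra_simps)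
  also have "\<dots> \<le> 304 * mu powr (p-2) + 16 * M * (3 / (real d)^2)"
    using binom_weight_sum binom_dev_fourth_moment_le[OF d0] M by (intro add_mono mult_left_mono) auto
  also have "304 * mu powr (p-2) = 1216 * (mu powr p / (real d)^2)"
    using d0 by (simp add: mu_def powr_diff powr_numeral power2_eq_square)
  also have "16 * M * (3 / (real d)^2) \<le> 48 * M * (mu powr p / (real d)^2)"
  proof -
    have "1 powr p \<le> mu powr p" using d p by (intro powr_mono2) (auto simp: mu_def)
    hence "48 * M * (1 / (real d)^2) \<le> 48 * M * (mu powr p / (real d)^2)"
      using M by (intro mult_left_mono divide_right_mono) auto
    thus ?thesis by simp
  qed
  finally have "\<bar>\<Sum>n\<le>d. binom_weight d n * chi_moment_remainder p n\<bar>
      \<le> (1216 + 48 * M) * (mu powr p / (real d)^2)" by (simp add: algebra_simps)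
  also have "\<dots> \<le> (1216 + 48 * M) * (mu powr p / (real d * sqrt (real d)))"
    using divide_square_le_divide_mult_sqrt[OF d1, of "mu powr p"] M by (intro mult_left_mono) auto
  finally show ?thesis by simp
qed

lemma I0_expansion:
  fixes s :: real assumes s: "0 < s" "s \<le> 2"
  defines "p \<equiv> s / 2"
  obtains K where "\<And>d. d \<ge> 64 \<Longrightarrow> \<bar>I0 s d - (real d / 2) powr p * (1 + (5 * p * (p - 1) / 2) / real d)\<bar>
                     \<le> K * (real d / 2) powr p / (real d * sqrt (real d))"
proof -
  have p: "0 < p" "p \<le> 1" using s by (auto simp: p_def)
  obtain M where M: "M \<ge> 0" "\<And>n. \<bar>chi_moment_remainder p n\<bar> \<le> M"
    using chi_moment_remainder_bounded[OF p] by blast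
  show ?thesis
  proof
    fix d :: nat assume d: "d \<ge> 64"
    define U where "U = (real d / 2) powr p / (real d * sqrt (real d))"
    define A1 where "A1 = (\<Sum>n\<le>d. binom_weight d n * (real n powr p - (real d / 2) powr p *
        (1 + p * binom_dev d n + (p^2 - p)/2 * binom_dev d n ^ 2)))"
    define A2 where "A2 = (\<Sum>n\<le>d. binom_weight d n * (real n powr (p - 1) - (real d / 2) powr (p - 1)))"
    define A3 where "A3 = (\<Sum>n\<le>d. binom_weight d n * chi_moment_remainder p n)"
    have "\<bar>A1\<bar> \<le> 72 * U" unfolding A1_def U_def using binom_taylor_error_le[OF p, of d] d by simp
    moreover have "\<bar>p * (p - 1)\<bar> \<le> 1" using p by (simp add: abs_mult abs_le_iff mult_le_one)
    hence "\<bar>p * (p - 1) * A2\<bar> \<le> 1 * (56 * U)"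
      unfolding abs_mult[of "p * (p - 1)"] A2_def U_def using binom_pred_power_error_le[OF p] d
      by (intro mult_mono) auto
    moreover have "\<bar>A3\<bar> \<le> (1216 + 48 * M) * U"
      unfolding A3_def U_def using binom_remainder_error_le[OF p _ M, of d] d by simp
    moreover have "I0 s d - (real d / 2) powr p * (1 + (5 * p * (p - 1) / 2) / real d)
        = A1 + p * (p - 1) * A2 + A3"
      unfolding A1_def A2_def A3_def p_def using d by (intro I0_minus_leading_terms) simp
    ultimately have "\<bar>I0 s d - (real d / 2) powr p * (1 + (5 * p * (p - 1) / 2) / real d)\<bar>
        \<le> (1344 + 48 * M) * U"
      by (simp add: algebra_simps)
    thus "\<bar>I0 s d - (real d / 2) powr p * (1 + (5 * p * (p - 1) / 2) / real d)\<bar>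
        \<le> (1344 + 48 * M) * (real d / 2) powr p / (real d * sqrt (real d))"
      by (simp add: U_def)
  qed
qed

lemma I0_relative_error_tendsto:
  fixes s :: real assumes s: "0 < s" "s \<le> 2"
  defines "p \<equiv> s / 2"
  shows "(\<lambda>d. real d * (I0 s d / (real d / 2) powr p - 1)) \<longlonglongrightarrow> 5 * p * (p - 1) / 2"
proof -
  define a where "a = 5 * p * (p - 1) / 2"
  obtain K where K: "\<And>d. d \<ge> 64 \<Longrightarrow> \<bar>I0 s d - (real d / 2) powr p * (1 + a / real d)\<bar>
                     \<le> K * (real d / 2) powr p / (real d * sqrt (real d))"
    using I0_expansion[OF s] unfolding a_def p_def by blast
  have "((\<lambda>t. K / sqrt t) \<longlongrightarrow> 0) at_top" by real_asymp
  from filterlim_compose[OF this filterlim_real_sequentially]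
  have "(\<lambda>d. K / sqrt (real d)) \<longlonglongrightarrow> 0" by (simp add: o_def)
  hence "(\<lambda>d. real d * (I0 s d / (real d / 2) powr p - 1) - a) \<longlonglongrightarrow> 0"
  proof (rule Lim_null_comparison[rotated])
    show "eventually (\<lambda>d. norm (real d * (I0 s d / (real d / 2) powr p - 1) - a) \<le> K / sqrt (real d))
            sequentially"
      using eventually_ge_at_top[of "64::nat"]
    proof eventually_elim
      case (elim d)
      define P where "P = (real d / 2) powr p"
      have d0: "real d > 0" and P0: "P > 0" using elim by (simp_all add: P_def)
      have "\<bar>real d * (I0 s d / P - 1) - a\<bar> = real d / P * \<bar>I0 s d - P * (1 + a / real d)\<bar>"
        using d0 P0 by (simp add: field_simps abs_mult abs_divide flip: abs_mult_pos)
      also have "\<dots> \<le> real d / P * (K * P / (real d * sqrt (real d)))"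
        using K[OF elim] d0 P0 by (intro mult_left_mono) (auto simp: P_def)
      also have "\<dots> = K / sqrt (real d)" using d0 P0 by (simp add: field_simps)
      finally show ?case by (simp add: P_def)
    qed
  qed
  thus ?thesis unfolding a_def by (simp add: LIM_zero_iff)
qed

section \<open>Asymptotics of \<open>sigma0\<close>\<close>

lemma tendsto_mult_powr_one_plus_minus_one:
  fixes u :: "nat \<Rightarrow> real" and q c :: real
  assumes q: "q \<le> 2" and lim: "(\<lambda>d. real d * u d) \<longlonglongrightarrow> c"
  shows "(\<lambda>d. real d * ((1 + u d) powr q - 1)) \<longlonglongrightarrow> q * c"
proof -
  have "(\<lambda>d. real d * u d * (1 / real d)) \<longlonglongrightarrow> c * 0"
    by (intro tendsto_intros lim)
  moreover have "eventually (\<lambda>d. real d * u d * (1 / real d) = u d) sequentially"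
    using eventually_gt_at_top[of "0::nat"] by eventually_elim simp
  ultimately have u0: "u \<longlonglongrightarrow> 0" by (simp add: Lim_transform_eventually)
  define B where "B = \<bar>\<Prod>j<2. (q - real j)\<bar> / fact 2 * 2 powr (real 2 - q)"
  define R where "R d = (1 + u d) powr q - 1 - q * u d" for d
  have "(\<lambda>d. real d * R d) \<longlonglongrightarrow> 0"
  proof (rule Lim_null_comparison)
    have "eventually (\<lambda>d. \<bar>u d\<bar> < 1/2) sequentially"
      using u0[unfolded tendsto_iff dist_real_def, rule_format, of "1/2"] by simp
    thus "eventually (\<lambda>d. norm (real d * R d) \<le> B * \<bar>real d * u d\<bar> * \<bar>u d\<bar>) sequentially"
    proof eventually_elim
      case (elim d)
      have "\<bar>(1 + u d) powr q - (\<Sum>m<2. (\<Prod>j<m. (q - real j)) / fact m * u d ^ m)\<bar> \<le> B * \<bar>u d\<bar>^2"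
        unfolding B_def by (rule powr_one_plus_taylor) (use q elim in auto)
      hence "\<bar>R d\<bar> \<le> B * (u d)^2" by (simp add: R_def eval_nat_numeral algebra_simps)
      hence "real d * \<bar>R d\<bar> \<le> real d * (B * (u d)^2)" by (intro mult_left_mono) auto
      thus ?case by (simp add: abs_mult power2_eq_square algebra_simps)
    qed
    have "(\<lambda>d. B * \<bar>real d * u d\<bar> * \<bar>u d\<bar>) \<longlonglongrightarrow> B * \<bar>c\<bar> * \<bar>0\<bar>"
      by (intro tendsto_intros lim u0)
    thus "(\<lambda>d. B * \<bar>real d * u d\<bar> * \<bar>u d\<bar>) \<longlonglongrightarrow> 0" by simp
  qed
  hence "(\<lambda>d. q * (real d * u d) + real d * R d) \<longlonglongrightarrow> q * c + 0"
    by (intro tendsto_intros lim)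
  thus ?thesis by (simp add: R_def algebra_simps)
qed

lemma smallo_first_order_expansion:
  fixes f g :: "nat \<Rightarrow> real"
  assumes lim: "(\<lambda>d. real d * (f d / g d - 1)) \<longlonglongrightarrow> c"
    and nz: "eventually (\<lambda>d. g d \<noteq> 0) sequentially"
  shows "(\<lambda>d. f d - g d * (1 + c / real d)) \<in> o(\<lambda>d. g d / real d)"
proof (rule smalloI_tendsto)
  have "(\<lambda>d. real d * (f d / g d - 1) - c) \<longlonglongrightarrow> 0"
    using lim by (simp add: LIM_zero)
  moreover have "eventually (\<lambda>d. real d * (f d / g d - 1) - c
      = (f d - g d * (1 + c / real d)) / (g d / real d)) sequentially"
    using nz eventually_gt_at_top[of "0::nat"] by eventually_elim (simp add: field_simps)
  ultimately show "((\<lambda>d. (f d - g d * (1 + c / real d)) / (g d / real d)) \<longlongrightarrow> 0) sequentially"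
    by (rule Lim_transform_eventually)
  show "eventually (\<lambda>d. g d / real d \<noteq> 0) sequentially"
    using nz eventually_gt_at_top[of "0::nat"] by eventually_elim simp
qed

lemma sigma0_square_eq:
  fixes s :: real assumes s: "s > 0" and d: "d > 0"
  defines "p \<equiv> s / 2"
  shows "(sigma0 s d)^2 = 2 / real d * (I0 s d / (real d / 2) powr p) powr (-1/p)"
proof -
  have "(sigma0 s d)^2 = I0 s d powr (-1/p)"
    unfolding sigma0_def p_def by (simp add: power2_eq_square flip: powr_add)
  also have "\<dots> = ((real d / 2) powr p) powr (-1/p) * (I0 s d / (real d / 2) powr p) powr (-1/p)"
    using d by (simp flip: powr_mult)
  also have "((real d / 2) powr p) powr (-1/p) = 2 / real d"
    using s d by (simp add: p_def powr_powr powr_minus_divide)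
  finally show ?thesis .
qed

lemma sigma0_square_ratio_tendsto:
  fixes s :: real assumes s: "0 < s" "s \<le> 2"
  shows "(\<lambda>d. real d * ((sigma0 s d)^2 / (2 / real d) - 1)) \<longlonglongrightarrow> 5 * (2 - s) / 4"
proof -
  define p where "p = s / 2"
  have q: "-1/p \<le> 2" using s by (simp add: p_def divide_simps)
  have "(\<lambda>d. real d * (I0 s d / (real d / 2) powr p - 1)) \<longlonglongrightarrow> 5 * p * (p - 1) / 2"
    unfolding p_def using I0_relative_error_tendsto s by blast
  from tendsto_mult_powr_one_plus_minus_one[OF q this]
  have "(\<lambda>d. real d * ((I0 s d / (real d / 2) powr p) powr (-1/p) - 1))
      \<longlonglongrightarrow> -1/p * (5 * p * (p - 1) / 2)" by simp
  also have "-1/p * (5 * p * (p - 1) / 2) = 5 * (2 - s) / 4"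
    using s by (simp add: p_def field_simps)
  finally show ?thesis
  proof (rule Lim_transform_eventually)
    show "eventually (\<lambda>d. real d * ((I0 s d / (real d / 2) powr p) powr (-1/p) - 1)
        = real d * ((sigma0 s d)^2 / (2 / real d) - 1)) sequentially"
      using eventually_gt_at_top[of "0::nat"]
      by eventually_elim (use s in \<open>simp add: sigma0_square_eq p_def\<close>)
  qed
qed

lemma sigma0_ratio_tendsto:
  fixes s :: real assumes "0 < s" "s \<le> 2"
  shows "(\<lambda>d. real d * (sigma0 s d / sqrt (2 / real d) - 1)) \<longlonglongrightarrow> 5 * (2 - s) / 8"
proof -
  have "(\<lambda>d. real d * ((1 + ((sigma0 s d)^2 / (2 / real d) - 1)) powr (1/2) - 1))
      \<longlonglongrightarrow> 1/2 * (5 * (2 - s) / 4)"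
    by (intro tendsto_mult_powr_one_plus_minus_one sigma0_square_ratio_tendsto assms) simp
  moreover have "((sigma0 s d)^2 / (2 / real d)) powr (1/2) = sigma0 s d / sqrt (2 / real d)" for d
  proof -
    have "((sigma0 s d)^2 / (2 / real d)) powr (1/2) = sqrt ((sigma0 s d)^2) / sqrt (2 / real d)"
      by (simp only: powr_half_sqrt divide_nonneg_nonneg zero_le_power2 real_sqrt_ge_zero
          real_sqrt_divide of_nat_0_le_iff zero_le_numeral)
    thus ?thesis by (simp add: sigma0_def)
  qed
  ultimately show ?thesis by simp
qed

theorem mainTheorem2:
  fixes s :: real
  assumes "0 < s" and "s \<le> 2"
  shows "((\<lambda>d::nat. (sigma0 s d)\<^sup>2 - (2 / real d + 5 * (2 - s) / (2 * (real d)\<^sup>2)))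
           \<in> o(\<lambda>d. 1 / (real d)\<^sup>2)) \<and>
         ((\<lambda>d::nat. sigma0 s d - (sqrt 2 / sqrt (real d)
              + 5 * sqrt 2 * (2 - s) / (8 * real d * sqrt (real d))))
           \<in> o(\<lambda>d. 1 / (real d * sqrt (real d))))"
proof -
  have nz: "eventually (\<lambda>d. 2 / real d \<noteq> 0 \<and> sqrt (2 / real d) \<noteq> 0) sequentially"
    using eventually_gt_at_top[of "0::nat"] by eventually_elim simp
  have "(\<lambda>d. (sigma0 s d)^2 - 2 / real d * (1 + 5 * (2 - s) / 4 / real d))
      \<in> o(\<lambda>d. 2 * (1 / (real d)^2))"
    using smallo_first_order_expansion[OF sigma0_square_ratio_tendsto[OF assms]] nz
    by (simp add: power2_eq_square eventually_conj_iff)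
  moreover have "2 / real d * (1 + 5 * (2 - s) / 4 / real d)
      = 2 / real d + 5 * (2 - s) / (2 * (real d)\<^sup>2)" for d
    by (cases "d = 0") (simp_all add: field_simps power2_eq_square)
  moreover have "(\<lambda>d. sigma0 s d - sqrt (2 / real d) * (1 + 5 * (2 - s) / 8 / real d))
      \<in> o(\<lambda>d. sqrt 2 * (1 / (real d * sqrt (real d))))"
    using smallo_first_order_expansion[OF sigma0_ratio_tendsto[OF assms]] nz
    by (simp add: real_sqrt_divide mult.commute eventually_conj_iff)
  moreover have "sqrt (2 / real d) * (1 + 5 * (2 - s) / 8 / real d)
      = sqrt 2 / sqrt (real d) + 5 * sqrt 2 * (2 - s) / (8 * real d * sqrt (real d))" for d
    by (cases "d = 0") (simp_all add: field_simps real_sqrt_divide)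
  ultimately show ?thesis
    by (simp only: landau_o.small.cmult real_sqrt_eq_zero_cancel_iff zero_neq_numeral[symmetric]
          simp_thms)
qed

end
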